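(* For any $d \in \mathbb{N}$ and any graph class $\mathcal{C}$, the following are equivalent: (i) $\mathcal{C}$ has tree rank at most $d$; (ii) for every $r \in \mathbb{N}$ there exists $m \in \mathbb{N}$ such that every vertex of every graph in $\mathcal{C}$ has $(r,m)$-rank at most $d$.
   Context: Graphs are finite and simple. For a graph $G$ and vertex $v$, $N_r^G(v)$ is the closed $r$-neighborhood of $v$ (all vertices reachable from $v$ by a path with at most $r$ edges, including $v$); $G-S$ is the subgraph induced on $V(G)\setminus S$. The depth of a rooted tree is the number of edges on a leaf-to-root path; $T_{d,m}$ is the rooted tree of depth $d$ in which every non-leaf vertex has exactly $m$ children. A $\le r$-subdivision of a graph $H$ is obtained by replacing each edge $uv$ by a path from $u$ to $v$ with at most $r$ internal vertices (paths internally disjoint). $H$ is an $r$-shallow topological minor of $G$ if $G$ has a subgraph isomorphic to a $\le r$-subdivision of $H$. A graph class $\mathcal{C}$ has tree rank at most $d$ if for every $r\in\mathbb{N}$ there exists $m\in\mathbb{N}$ such that no $G\in\mathcal{C}$ contains $T_{d,m}$ as an $r$-shallow topological minor. The $(r,m)$-rank of vertices of $G$ (values in $\mathbb{N}\cup\{\infty\}$) is defined by the following procedure: initially every vertex has rank $\infty$; in rounds $i=1,2,3,\dots$, every vertex $v$ that currently has rank $\infty$ receives rank $i$ if there exists a set $S\subseteq V(G)\setminus\{v\}$ with $|S|\le m$ such that every vertex of $N_r^{G-S}(v)\setminus\{v\}$ received a finite rank in rounds $1,\dots,i-1$ (all vertices are checked simultaneously in a round); the procedure stops when all vertices have finite rank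 or a round assigns no new rank. Vertices still of rank $\infty$ keep rank $\infty$. *)

theory Defs
  imports Main "HOL-Library.Extended_Nat"
begin

type_synonym 'a graph = "'a set \<times> ('a \<times> 'a) set"

definition verts :: "'a graph \<Rightarrow> 'a set" where "verts G = fst G"
definition edges :: "'a graph \<Rightarrow> ('a \<times> 'a) set" where "edges G = snd G"

definition is_graph :: "'a graph \<Rightarrow> bool" where
  "is_graph G \<longleftrightarrow> finite (verts G) \<and> edges G \<subseteq> verts G \<times> verts G
     \<and> (\<forall>x y. (x, y) \<in> edges G \<longrightarrow> (y, x) \<in> edges G)
     \<and> (\<forall>x. (x, x) \<notin> edges G)"

definition del_verts :: "'a graph \<Rightarrow> 'a set \<Rightarrow> 'a graph" where
  "del_verts G S = (verts G - S, {(x, y) \<in> edges G. x \<notin> S \<and> y \<notin> S})"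

fun nbhd :: "'a graph \<Rightarrow> nat \<Rightarrow> 'a \<Rightarrow> 'a set" where
  "nbhd G 0 v = {v}"
| "nbhd G (Suc k) v = nbhd G k v \<union> {u. \<exists>w \<in> nbhd G k v. (w, u) \<in> edges G}"

text \<open>The rooted tree T_{d,m}: vertices are words of length at most d over
  {0..<m} (the root is the empty word), each word xs with length < d has the m
  children xs @ [i].\<close>
definition tree :: "nat \<Rightarrow> nat \<Rightarrow> nat list graph" where
  "tree d m = ({xs. length xs \<le> d \<and> set xs \<subseteq> {..<m}},
     {(xs, xs @ [i]) | xs i. length xs < d \<and> set xs \<subseteq> {..<m} \<and> i < m}
     \<union> {(xs @ [i], xs) | xs i. length xs < d \<and> set xs \<subseteq> {..<m} \<and> i < m})"

text \<open>H is an r-shallow topological minor of G: G contains a subgraph isomorphic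
  to a \<le>r-subdivision of H. Branch vertices are mapped injectively by f; the
  edge xy of H is mapped to the path f x, P(x,y), f y in G, where P(x,y) is the
  list of at most r internal vertices; internal vertices are distinct, avoid
  all branch vertices, and paths of distinct edges are internally disjoint.\<close>
definition shallow_top_minor :: "nat \<Rightarrow> 'b graph \<Rightarrow> 'a graph \<Rightarrow> bool" where
  "shallow_top_minor r H G \<longleftrightarrow>
    (\<exists>(f :: 'b \<Rightarrow> 'a) (P :: 'b \<times> 'b \<Rightarrow> 'a list).
       inj_on f (verts H) \<and> f ` verts H \<subseteq> verts G \<and>
       (\<forall>(x, y) \<in> edges H.
          length (P (x, y)) \<le> r \<and> distinct (P (x, y)) \<and>
          set (P (x, y)) \<subseteq> verts G - f ` verts H \<and>
          P (y, x) = rev (P (x, y)) \<and>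
          (let w = f x # P (x, y) @ [f y] in
             \<forall>i < length w - 1. (w ! i, w ! Suc i) \<in> edges G)) \<and>
       (\<forall>(x, y) \<in> edges H. \<forall>(x', y') \<in> edges H.
          {x, y} \<noteq> {x', y'} \<longrightarrow> set (P (x, y)) \<inter> set (P (x', y')) = {}))"

definition tree_rank_le :: "'a graph set \<Rightarrow> nat \<Rightarrow> bool" where
  "tree_rank_le C d \<longleftrightarrow>
    (\<forall>r. \<exists>m. \<forall>G \<in> C. \<not> shallow_top_minor r (tree d m) G)"

text \<open>ranked_upto r m G i = set of vertices that received a finite rank in
  rounds 1..i of the (r,m)-rank procedure.\<close>
fun ranked_upto :: "nat \<Rightarrow> nat \<Rightarrow> 'a graph \<Rightarrow> nat \<Rightarrow> 'a set" where
  "ranked_upto r m G 0 = {}"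
| "ranked_upto r m G (Suc i) = ranked_upto r m G i \<union>
     {v \<in> verts G. \<exists>S. S \<subseteq> verts G - {v} \<and> card S \<le> m \<and>
        nbhd (del_verts G S) r v - {v} \<subseteq> ranked_upto r m G i}"

definition rm_rank :: "nat \<Rightarrow> nat \<Rightarrow> 'a graph \<Rightarrow> 'a \<Rightarrow> enat" where
  "rm_rank r m G v = (if \<exists>i. v \<in> ranked_upto r m G i
     then enat (LEAST i. v \<in> ranked_upto r m G i) else \<infinity>)"

end

theory Submission
  imports Defs "HOL-Library.Disjoint_Sets"
begin

text \<open>If \<open>G\<close> contains a \<open>\<le>r\<close>-subdivision of \<open>tree d M\<close> with \<open>M > m\<close>, then, by induction on \<open>i\<close>,
  the branch vertex of a node of depth at most \<open>d - i\<close> is not \<open>(r+1, m)\<close>-ranked within \<open>i\<close>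
  rounds: any \<open>m\<close> deleted vertices miss one of the \<open>M\<close> disjoint branches to its children,
  and such a branch is a path of length at most \<open>r+1\<close> to a vertex that is still unranked.
  So the root has rank above \<open>d\<close>.

  Conversely, if \<open>v\<close> has \<open>(r, M)\<close>-rank above \<open>d\<close> and \<open>M\<close> is at least \<open>r+1\<close> times the size
  of \<open>tree d m\<close>, embed \<open>tree d m\<close> greedily, parents before children, keeping each node \<open>t\<close>
  on a vertex not ranked within \<open>d - length t\<close> rounds. To place a child, delete the at most
  \<open>M\<close> vertices used so far other than the image of its parent: as the parent is not ranked
  within one more round, the rank procedure itself provides a suitable new vertex within
  distance \<open>r\<close>, joined to the parent by a path that avoids every used vertex.\<close>

section \<open>Walks and neighbourhoods\<close>

abbreviation walk :: "'a graph \<Rightarrow> 'a list \<Rightarrow> bool" where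
  "walk G ws \<equiv> successively (\<lambda>a b. (a, b) \<in> edges G) ws"

lemma walk_nth: "walk G ws \<longleftrightarrow> (\<forall>i < length ws - 1. (ws ! i, ws ! Suc i) \<in> edges G)"
  unfolding successively_conv_nth by (simp add: less_diff_conv)

lemma nbhd_mono: "k \<le> k' \<Longrightarrow> nbhd G k v \<subseteq> nbhd G k' v"
  by (induction k' rule: dec_induct) auto

lemma walk_last_in_nbhd: "walk G (v # ws) \<Longrightarrow> last (v # ws) \<in> nbhd G (length ws) v"
proof (induction ws rule: rev_induct)
  case (snoc x ws)
  have "walk G (v # ws)" "(last (v # ws), x) \<in> edges G"
    using snoc.prems successively_append_iff[of _ "v # ws" "[x]"] by simp_all
  with snoc.IH have "\<exists>w \<in> nbhd G (length ws) v. (w, x) \<in> edges G" by blast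
  then show ?case by simp
qed simp

lemma nbhd_walkE:
  assumes "u \<in> nbhd G k v"
  obtains ws where "walk G (v # ws)" "distinct (v # ws)" "length ws \<le> k" "last (v # ws) = u"
  using assms
proof (induction k arbitrary: u thesis)
  case 0
  then show ?case by (auto intro: 0(1)[of "[]"])
next
  case (Suc k)
  show ?case
  proof (cases "u \<in> nbhd G k v")
    case True
    then obtain ws where "walk G (v # ws)" "distinct (v # ws)" "length ws \<le> k" "last (v # ws) = u"
      using Suc.IH by blast
    then show ?thesis by (intro Suc.prems(1)) auto
  next
    case False
    then obtain w where w: "w \<in> nbhd G k v" "(w, u) \<in> edges G"
      using Suc.prems(2) by auto
    obtain ws where ws: "walk G (v # ws)" "distinct (v # ws)" "length ws \<le> k" "last (v # ws) = w"
      using Suc.IH[OF _ w(1)] by blast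
    show ?thesis
    proof (cases "u \<in> set (v # ws)")
      case True
      then obtain as bs where split: "v # ws = as @ u # bs" by (meson split_list)
      show ?thesis
      proof (cases as)
        case Nil
        then show ?thesis using split by (intro Suc.prems(1)[of "[]"]) auto
      next
        case (Cons a as')
        have "walk G ((as @ [u]) @ bs)" using ws split by simp
        then have "walk G (as @ [u])" unfolding successively_append_iff by blast
        then have "walk G (v # as' @ [u])" using split Cons by simp
        moreover have "distinct (v # as' @ [u])" "length (as' @ [u]) \<le> Suc k"
          using ws split Cons by auto
        ultimately show ?thesis by (intro Suc.prems(1)) auto
      qed
    next
      case False
      have "walk G ((v # ws) @ [u])"
        using ws w unfolding successively_append_iff by simp
      then have "walk G (v # ws @ [u])" by simp
      then show ?thesis using ws False by (intro Suc.prems(1)[of "ws @ [u]"]) auto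
    qed
  qed
qed

lemma walk_del_verts: "walk G ws \<Longrightarrow> set ws \<inter> S = {} \<Longrightarrow> walk (del_verts G S) ws"
  by (erule successively_mono) (auto simp: del_verts_def edges_def)

lemma walk_del_verts_imp_walk: "walk (del_verts G S) ws \<Longrightarrow> walk G ws"
  by (erule successively_mono) (auto simp: del_verts_def edges_def)

lemma walk_Cons_set_subset_Range: "walk G (v # ws) \<Longrightarrow> set ws \<subseteq> Range (edges G)"
  by (induction ws arbitrary: v) auto

lemma Range_edges_del_verts:
  "edges G \<subseteq> verts G \<times> verts G \<Longrightarrow> Range (edges (del_verts G S)) \<subseteq> verts G - S"
  by (auto simp: del_verts_def edges_def)

lemma walk_rev: "sym (edges G) \<Longrightarrow> walk G ws \<Longrightarrow> walk G (rev ws)"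
  unfolding successively_rev by (erule successively_mono) (auto dest: symD)

section \<open>Trees as sets of words\<close>

lemma tree_verts: "verts (tree d m) = {xs. length xs \<le> d \<and> set xs \<subseteq> {..<m}}"
  by (simp add: tree_def verts_def)

lemma finite_tree_verts: "finite (verts (tree d m))"
  unfolding tree_verts using finite_lists_length_le[of "{..<m}" d] by (simp add: conj_commute)

lemma tree_edges_iff:
  "(x, y) \<in> edges (tree d m) \<longleftrightarrow>
     (y \<in> verts (tree d m) - {[]} \<and> x = butlast y) \<or> (x \<in> verts (tree d m) - {[]} \<and> y = butlast x)"
proof -
  have child: "(\<exists>i. y = x @ [i] \<and> length x < d \<and> set x \<subseteq> {..<m} \<and> i < m) \<longleftrightarrow>
      y \<in> verts (tree d m) - {[]} \<and> x = butlast y" for x y :: "nat list"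
    unfolding tree_verts
    by (cases y rule: rev_cases) auto
  show ?thesis
    using child[of x y] child[of y x] by (auto simp: tree_def edges_def)
qed

definition butlast_closed :: "'a list set \<Rightarrow> bool" where
  "butlast_closed T \<longleftrightarrow> (\<forall>t \<in> T. t \<noteq> [] \<longrightarrow> butlast t \<in> T)"

lemma butlast_closed_tree_verts: "butlast_closed (verts (tree d m))"
  unfolding butlast_closed_def tree_verts by (auto dest: in_set_butlastD)

lemma butlast_closed_induct [consumes 3, case_names root insert]:
  assumes "finite T" "[] \<in> T" "butlast_closed T"
    and root: "P {[]}"
    and insert: "\<And>T t. finite T \<Longrightarrow> [] \<in> T \<Longrightarrow> butlast_closed T \<Longrightarrow> t \<notin> T \<Longrightarrow> butlast t \<in> T
      \<Longrightarrow> P T \<Longrightarrow> P (insert t T)"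
  shows "P T"
  using assms(1-3)
proof (induction "card T" arbitrary: T rule: less_induct)
  case less
  show ?case
  proof (cases "T = {[]}")
    case True
    then show ?thesis using root by simp
  next
    case False
    have "Max (length ` T) \<in> length ` T"
      using less.prems by (intro Max_in) auto
    then obtain t where t: "t \<in> T" "length t = Max (length ` T)" by auto
    have longest: "length s \<le> length t" if "s \<in> T" for s
      using t less.prems that by simp
    have "t \<noteq> []"
    proof
      assume "t = []"
      then have "T \<subseteq> {[]}" using longest by auto
      then show False using False less.prems(2) by auto
    qed
    define T' where "T' = T - {t}"
    have shorter: "butlast s \<in> T'" if "s \<in> T" "s \<noteq> []" for s
    proof -
      have "length (butlast s) < length t" using longest[OF that(1)] that(2) by (cases s) auto
      then show ?thesis
        using less.prems(3) that unfolding butlast_closed_def T'_def by auto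
    qed
    then have closed: "butlast_closed T'"
      unfolding butlast_closed_def T'_def by blast
    have "card T' < card T"
      using less.prems(1) t(1) unfolding T'_def by (rule card_Diff1_less)
    then have "P T'"
      using less.hyps[of T'] less.prems closed \<open>t \<noteq> []\<close> t(1) unfolding T'_def by simp
    moreover have "butlast t \<in> T'"
      using shorter t(1) \<open>t \<noteq> []\<close> by blast
    ultimately have "P (insert t T')"
      using insert[of T' t] less.prems closed \<open>t \<noteq> []\<close> unfolding T'_def by auto
    then show ?thesis using t(1) unfolding T'_def by (simp add: insert_absorb)
  qed
qed

section \<open>Subdivided trees\<close>

text \<open>\<open>f\<close> and \<open>Q\<close> embed a \<open>\<le>r\<close>-subdivision of the tree on the words \<open>T\<close> into \<open>G\<close>: the tree
  edge from \<open>butlast t\<close> to \<open>t\<close> becomes the path \<open>f (butlast t) # Q t @ [f t]\<close>.\<close>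

definition subdivided_embedding ::
    "'a graph \<Rightarrow> nat \<Rightarrow> 'b list set \<Rightarrow> ('b list \<Rightarrow> 'a) \<Rightarrow> ('b list \<Rightarrow> 'a list) \<Rightarrow> bool" where
  "subdivided_embedding G r T f Q \<longleftrightarrow>
     inj_on f T \<and> f ` T \<subseteq> verts G \<and>
     (\<forall>t \<in> T - {[]}. walk G (f (butlast t) # Q t @ [f t]) \<and> distinct (Q t) \<and>
        length (Q t) \<le> r \<and> set (Q t) \<subseteq> verts G - f ` T) \<and>
     disjoint_family_on (\<lambda>t. set (Q t)) (T - {[]})"

lemma subdivided_embedding_disjoint_branches:
  assumes "subdivided_embedding G r T f Q"
  shows "disjoint_family_on (\<lambda>t. insert (f t) (set (Q t))) (T - {[]})"
  using assms unfolding subdivided_embedding_def disjoint_family_on_def inj_on_def by blast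

lemma card_subdivided_embedding_image:
  assumes "subdivided_embedding G r T f Q" "finite T"
  shows "card (f ` T \<union> (\<Union>t \<in> T - {[]}. set (Q t))) \<le> card T * Suc r"
proof -
  have "card (f ` T \<union> (\<Union>t \<in> T - {[]}. set (Q t)))
      \<le> card (f ` T) + card (\<Union>t \<in> T - {[]}. set (Q t))"
    by (rule card_Un_le)
  also have "\<dots> \<le> card T + (\<Sum>t \<in> T - {[]}. card (set (Q t)))"
    using assms(2) by (intro add_mono card_image_le card_UN_le) auto
  also have "(\<Sum>t \<in> T - {[]}. card (set (Q t))) \<le> (\<Sum>t \<in> T. r)"
  proof -
    have "(\<Sum>t \<in> T - {[]}. card (set (Q t))) \<le> (\<Sum>t \<in> T - {[]}. r)"
      using assms(1) unfolding subdivided_embedding_def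
      by (intro sum_mono) (meson card_length le_trans)
    also have "\<dots> \<le> (\<Sum>t \<in> T. r)"
      using assms(2) by (intro sum_mono2) auto
    finally show ?thesis .
  qed
  finally show ?thesis by simp
qed

lemma subdivided_embedding_insert:
  assumes emb: "subdivided_embedding G r T f Q" and closed: "butlast_closed T"
    and t: "t \<notin> T" "butlast t \<in> T"
    and path: "walk G (f (butlast t) # ps @ [u])" "distinct (ps @ [u])" "length ps \<le> r"
    and fresh: "set (ps @ [u]) \<subseteq> verts G - (f ` T \<union> (\<Union>s \<in> T - {[]}. set (Q s)))"
  shows "subdivided_embedding G r (insert t T) (f(t := u)) (Q(t := ps))"
proof -
  have "t \<noteq> []" using t by auto
  have f_eq: "(f(t := u)) s = f s" and Q_eq: "(Q(t := ps)) s = Q s" if "s \<in> T" for s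
    using t that by auto
  have image: "(f(t := u)) ` insert t T = insert u (f ` T)"
    using t by auto
  have parent: "butlast s \<in> T" if "s \<in> insert t T - {[]}" for s
    using that t closed unfolding butlast_closed_def by auto
  have "inj_on (f(t := u)) (insert t T)"
    using emb fresh t unfolding subdivided_embedding_def by (auto simp: inj_on_def)
  moreover have "(f(t := u)) ` insert t T \<subseteq> verts G"
    using emb fresh unfolding image subdivided_embedding_def by auto
  moreover have "walk G ((f(t := u)) (butlast s) # (Q(t := ps)) s @ [(f(t := u)) s]) \<and>
      distinct ((Q(t := ps)) s) \<and> length ((Q(t := ps)) s) \<le> r \<and>
      set ((Q(t := ps)) s) \<subseteq> verts G - (f(t := u)) ` insert t T"
    if s: "s \<in> insert t T - {[]}" for s
  proof (cases "s = t")
    case True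
    then show ?thesis
      using path fresh t unfolding image by (auto simp: f_eq)
  next
    case False
    then have s': "s \<in> T - {[]}" using s by simp
    have "u \<notin> set (Q s)" using fresh s' by auto
    moreover have "walk G (f (butlast s) # Q s @ [f s]) \<and> distinct (Q s) \<and> length (Q s) \<le> r \<and>
        set (Q s) \<subseteq> verts G - f ` T"
      using emb s' unfolding subdivided_embedding_def by blast
    ultimately show ?thesis
      unfolding image f_eq[OF parent[OF s]] f_eq[of s] Q_eq[of s] using s' False by auto
  qed
  moreover have "disjoint_family_on (\<lambda>s. set ((Q(t := ps)) s)) (insert t T - {[]})"
  proof -
    have "disjoint_family_on (\<lambda>s. set ((Q(t := ps)) s)) (T - {[]})"
      using emb t(1) unfolding subdivided_embedding_def disjoint_family_on_def by auto
    moreover have "set ps \<inter> (\<Union>s \<in> T - {[]}. set ((Q(t := ps)) s)) = {}"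
      using fresh t(1) by (auto split: if_splits)
    ultimately show ?thesis
      using t \<open>t \<noteq> []\<close> by (simp add: insert_Diff_if disjoint_family_on_insert)
  qed
  ultimately show ?thesis
    unfolding subdivided_embedding_def by blast
qed

lemma shallow_top_minor_tree_imp_subdivided_embedding:
  assumes "shallow_top_minor r (tree d m) G"
  obtains f Q where "subdivided_embedding G r (verts (tree d m)) f Q"
proof -
  let ?V = "verts (tree d m)"
  obtain f P where inj: "inj_on f ?V" and f_verts: "f ` ?V \<subseteq> verts G"
    and paths: "\<forall>(x, y) \<in> edges (tree d m). length (P (x, y)) \<le> r \<and> distinct (P (x, y)) \<and>
        set (P (x, y)) \<subseteq> verts G - f ` ?V \<and> P (y, x) = rev (P (x, y)) \<and>
        (let w = f x # P (x, y) @ [f y] in \<forall>i < length w - 1. (w ! i, w ! Suc i) \<in> edges G)"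
    and disj: "\<forall>(x, y) \<in> edges (tree d m). \<forall>(x', y') \<in> edges (tree d m).
        {x, y} \<noteq> {x', y'} \<longrightarrow> set (P (x, y)) \<inter> set (P (x', y')) = {}"
    using assms unfolding shallow_top_minor_def by (elim exE conjE) (rule that)
  define Q where "Q t = P (butlast t, t)" for t
  have edge: "(butlast t, t) \<in> edges (tree d m)" if "t \<in> ?V - {[]}" for t
    using that by (simp add: tree_edges_iff)
  have "{butlast t, t} \<noteq> {butlast t', t'}" if "t \<noteq> t'" "t \<noteq> []" "t' \<noteq> []" for t t' :: "nat list"
  proof
    assume "{butlast t, t} = {butlast t', t'}"
    then have "t = butlast t'" "t' = butlast t"
      using that(1) by (auto simp: doubleton_eq_iff)
    then have "length t < length t'" "length t' < length t"
      using that(2,3) by (metis length_butlast diff_less length_greater_0_conv zero_less_one)+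
    then show False by simp
  qed
  moreover have "set (P (x, y)) \<inter> set (P (x', y')) = {}"
    if "(x, y) \<in> edges (tree d m)" "(x', y') \<in> edges (tree d m)" "{x, y} \<noteq> {x', y'}" for x y x' y'
    using disj that by blast
  ultimately have "disjoint_family_on (\<lambda>t. set (Q t)) (?V - {[]})"
    using edge unfolding disjoint_family_on_def Q_def by simp
  moreover have "walk G (f (butlast t) # Q t @ [f t]) \<and> distinct (Q t) \<and> length (Q t) \<le> r \<and>
      set (Q t) \<subseteq> verts G - f ` ?V" if "t \<in> ?V - {[]}" for t
    using paths edge[OF that] unfolding Q_def walk_nth Let_def by fastforce
  ultimately show thesis
    using inj f_verts by (intro that[of f Q]) (simp add: subdivided_embedding_def)
qed

lemma subdivided_embedding_imp_shallow_top_minor_tree: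
  assumes sym: "sym (edges G)" and emb: "subdivided_embedding G r (verts (tree d m)) f Q"
  shows "shallow_top_minor r (tree d m) G"
proof -
  let ?V = "verts (tree d m)"
  define P where "P = (\<lambda>(x :: nat list, y :: nat list).
    if length x < length y then Q y else rev (Q x))"
  have down: "P (butlast c, c) = Q c" "P (c, butlast c) = rev (Q c)" if "c \<noteq> []" for c
    using that by (simp_all add: P_def less_diff_conv)
  have edge_path: "\<exists>c \<in> ?V - {[]}. {x, y} = {butlast c, c} \<and> set (P (x, y)) = set (Q c) \<and>
      P (y, x) = rev (P (x, y)) \<and> length (P (x, y)) \<le> r \<and> distinct (P (x, y)) \<and>
      set (P (x, y)) \<subseteq> verts G - f ` ?V \<and> walk G (f x # P (x, y) @ [f y])"
    if "(x, y) \<in> edges (tree d m)" for x y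
    using that unfolding tree_edges_iff
  proof (elim disjE conjE)
    assume c: "y \<in> ?V - {[]}" "x = butlast y"
    then show ?thesis
      using emb down[of y] unfolding subdivided_embedding_def by (intro bexI[OF _ c(1)]) auto
  next
    assume c: "x \<in> ?V - {[]}" "y = butlast x"
    have "walk G (rev (f y # Q x @ [f x]))"
      using emb c walk_rev[OF sym] unfolding subdivided_embedding_def by blast
    then show ?thesis
      using emb c down[of x] unfolding subdivided_embedding_def by (intro bexI[OF _ c(1)]) auto
  qed
  show ?thesis
    unfolding shallow_top_minor_def
  proof (intro exI conjI)
    show "inj_on f ?V" "f ` ?V \<subseteq> verts G"
      using emb unfolding subdivided_embedding_def by blast+
    show "\<forall>(x, y) \<in> edges (tree d m). length (P (x, y)) \<le> r \<and> distinct (P (x, y)) \<and>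
        set (P (x, y)) \<subseteq> verts G - f ` ?V \<and> P (y, x) = rev (P (x, y)) \<and>
        (let w = f x # P (x, y) @ [f y] in \<forall>i < length w - 1. (w ! i, w ! Suc i) \<in> edges G)"
      using edge_path unfolding Let_def walk_nth[symmetric] by blast
    show "\<forall>(x, y) \<in> edges (tree d m). \<forall>(x', y') \<in> edges (tree d m).
        {x, y} \<noteq> {x', y'} \<longrightarrow> set (P (x, y)) \<inter> set (P (x', y')) = {}"
    proof (clarify)
      fix x y x' y'
      assume "(x, y) \<in> edges (tree d m)" "(x', y') \<in> edges (tree d m)" "{x, y} \<noteq> {x', y'}"
      then obtain c c' where "c \<in> ?V - {[]}" "{x, y} = {butlast c, c}" "set (P (x, y)) = set (Q c)"
        "c' \<in> ?V - {[]}" "{x', y'} = {butlast c', c'}" "set (P (x', y')) = set (Q c')"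
        using edge_path by meson
      moreover have "c \<noteq> c'" using calculation \<open>{x, y} \<noteq> {x', y'}\<close> by auto
      ultimately show "set (P (x, y)) \<inter> set (P (x', y')) = {}"
        using emb unfolding subdivided_embedding_def by (auto dest: disjoint_family_onD)
    qed
  qed
qed

section \<open>Ranks and subdivided trees\<close>

declare ranked_upto.simps(2)[simp del]

lemma ranked_upto_mono: "i \<le> j \<Longrightarrow> ranked_upto r m G i \<subseteq> ranked_upto r m G j"
  by (rule lift_Suc_mono_le[of "ranked_upto r m G"]) (auto simp: ranked_upto.simps(2))

lemma rm_rank_le_enat_iff: "rm_rank r m G v \<le> enat d \<longleftrightarrow> v \<in> ranked_upto r m G d"
proof
  assume "rm_rank r m G v \<le> enat d"
  then obtain i where "v \<in> ranked_upto r m G i" and "(LEAST i. v \<in> ranked_upto r m G i) \<le> d"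
    by (auto simp: rm_rank_def split: if_splits)
  then show "v \<in> ranked_upto r m G d"
    by (meson LeastI ranked_upto_mono subsetD)
qed (auto simp: rm_rank_def intro: Least_le)

lemma disjoint_family_elem_disjnt_card:
  assumes "finite C" "card C < card A" and df: "disjoint_family_on B A"
  obtains x where "x \<in> A" "disjnt C (B x)"
proof -
  have False if hit: "\<forall>x \<in> A. \<exists>y. y \<in> C \<and> y \<in> B x"
  proof -
    obtain g where g: "\<forall>x \<in> A. g x \<in> C \<and> g x \<in> B x"
      using hit by metis
    with df have "inj_on g A"
      by (fastforce simp add: inj_on_def disjoint_family_on_def)
    then have "card A \<le> card C"
      using g \<open>finite C\<close> by (intro card_inj_on_le) auto
    then show False using \<open>card C < card A\<close> by simp
  qed
  then show ?thesis
    by (force simp: disjnt_iff intro: that)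
qed

lemma subdivided_embedding_not_ranked:
  assumes emb: "subdivided_embedding G r (verts (tree d M)) f Q"
    and fin: "finite (verts G)" and "m < M"
  shows "t \<in> verts (tree d M) \<Longrightarrow> length t + i \<le> d \<Longrightarrow> f t \<notin> ranked_upto (Suc r) m G i"
proof (induction i arbitrary: t)
  case (Suc i)
  show ?case
  proof
    assume "f t \<in> ranked_upto (Suc r) m G (Suc i)"
    moreover have "f t \<notin> ranked_upto (Suc r) m G i"
      using Suc by simp
    ultimately obtain S where S: "S \<subseteq> verts G - {f t}" "card S \<le> m"
      and ranked: "nbhd (del_verts G S) (Suc r) (f t) - {f t} \<subseteq> ranked_upto (Suc r) m G i"
      unfolding ranked_upto.simps(2) by blast
    define children where "children = (\<lambda>j. t @ [j]) ` {..<M}"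
    have children: "children \<subseteq> verts (tree d M) - {[]}" "card children = M"
      using Suc.prems unfolding children_def tree_verts by (auto simp: card_image inj_on_def)
    moreover have "finite S" "card S < M"
      using S fin \<open>m < M\<close> by (auto intro: finite_subset)
    ultimately obtain c where c: "c \<in> children" "disjnt S (insert (f c) (set (Q c)))"
      using disjoint_family_on_mono[OF children(1) subdivided_embedding_disjoint_branches[OF emb]]
      by (elim disjoint_family_elem_disjnt_card) auto
    have c_parent: "butlast c = t" "length c = Suc (length t)"
      using c(1) unfolding children_def by auto
    have path: "walk G (f t # Q c @ [f c])" "length (Q c) \<le> r"
      using emb c(1) children(1) c_parent unfolding subdivided_embedding_def by auto
    have "f t \<notin> S" using S by blast
    then have "walk (del_verts G S) (f t # Q c @ [f c])"
      using path(1) c(2) by (intro walk_del_verts) (auto simp: disjnt_def)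
    then have "f c \<in> nbhd (del_verts G S) (length (Q c @ [f c])) (f t)"
      using walk_last_in_nbhd by fastforce
    also have "\<dots> \<subseteq> nbhd (del_verts G S) (Suc r) (f t)"
      using path(2) by (intro nbhd_mono) simp
    finally have "f c \<in> nbhd (del_verts G S) (Suc r) (f t)" .
    moreover have "f c \<noteq> f t"
    proof
      assume "f c = f t"
      then have "c = t"
        using emb c(1) children(1) Suc.prems(1) unfolding subdivided_embedding_def
        by (meson DiffD1 inj_onD subsetD)
      then show False using c_parent(2) by simp
    qed
    ultimately have "f c \<in> ranked_upto (Suc r) m G i"
      using ranked by blast
    moreover have "f c \<notin> ranked_upto (Suc r) m G i"
      using Suc.IH c(1) children(1) c_parent Suc.prems(2) by auto
    ultimately show False by contradiction
  qed
qed simp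

lemma shallow_top_minor_imp_not_ranked:
  assumes "is_graph G" "shallow_top_minor r (tree d M) G" "m < M"
  shows "\<exists>v \<in> verts G. v \<notin> ranked_upto (Suc r) m G d"
proof -
  obtain f Q where emb: "subdivided_embedding G r (verts (tree d M)) f Q"
    using assms(2) by (rule shallow_top_minor_tree_imp_subdivided_embedding)
  have root: "[] \<in> verts (tree d M)"
    by (simp add: tree_verts)
  moreover have "finite (verts G)"
    using assms(1) by (simp add: is_graph_def)
  ultimately have "f [] \<notin> ranked_upto (Suc r) m G d"
    using subdivided_embedding_not_ranked[OF emb _ assms(3)] by simp
  moreover have "f [] \<in> verts G"
    using emb root unfolding subdivided_embedding_def by blast
  ultimately show ?thesis by blast
qed

lemma not_ranked_Suc_walkE:
  assumes G: "edges G \<subseteq> verts G \<times> verts G"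
    and v: "v \<in> verts G" "v \<notin> ranked_upto r m G (Suc i)"
    and S: "S \<subseteq> verts G - {v}" "card S \<le> m"
  obtains u ps where "u \<notin> ranked_upto r m G i" "walk G (v # ps @ [u])" "distinct (v # ps @ [u])"
    "length ps < r" "set (ps @ [u]) \<subseteq> verts G - S"
proof -
  have "\<not> nbhd (del_verts G S) r v - {v} \<subseteq> ranked_upto r m G i"
    using v S unfolding ranked_upto.simps(2) by blast
  then obtain u where u: "u \<in> nbhd (del_verts G S) r v" "u \<noteq> v" "u \<notin> ranked_upto r m G i"
    by blast
  obtain ws where ws: "walk (del_verts G S) (v # ws)" "distinct (v # ws)" "length ws \<le> r"
    "last (v # ws) = u"
    using u(1) by (rule nbhd_walkE)
  then have "ws \<noteq> []" using u(2) by auto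
  then have ws_eq: "ws = butlast ws @ [u]"
    using ws(4) by (metis append_butlast_last_id last_ConsR)
  have "set ws \<subseteq> verts G - S"
    using walk_Cons_set_subset_Range[OF ws(1)] Range_edges_del_verts[OF G] by blast
  moreover have "length (butlast ws) < r"
    using ws(3) \<open>ws \<noteq> []\<close> by (cases ws) auto
  moreover have "walk G (v # ws)"
    using ws(1) by (rule walk_del_verts_imp_walk)
  ultimately show thesis
    using ws(2) u(3) by (intro that[of u "butlast ws"]) (simp_all flip: ws_eq)
qed

lemma subdivided_embedding_extend_not_ranked:
  assumes G: "is_graph G"
    and emb: "subdivided_embedding G r T f Q"
    and not_ranked: "\<forall>s \<in> T. f s \<notin> ranked_upto r M G (d - length s)"
    and T: "finite T" "butlast_closed T" "t \<notin> T" "butlast t \<in> T" "length t \<le> d"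
    and M: "card T * Suc r \<le> M"
  obtains u ps where "subdivided_embedding G r (insert t T) (f(t := u)) (Q(t := ps))"
    "\<forall>s \<in> insert t T. (f(t := u)) s \<notin> ranked_upto r M G (d - length s)"
proof -
  define p where "p = butlast t"
  define U where "U = f ` T \<union> (\<Union>s \<in> T - {[]}. set (Q s))"
  have "t \<noteq> []" using T(3,4) by auto
  then have "d - length p = Suc (d - length t)"
    using T(5) unfolding p_def by (cases t rule: rev_cases) auto
  then have p: "f p \<in> verts G" "f p \<notin> ranked_upto r M G (Suc (d - length t))"
    using emb not_ranked T(4) unfolding p_def subdivided_embedding_def by auto
  have "U \<subseteq> verts G"
    using emb unfolding U_def subdivided_embedding_def by blast
  then have S: "U - {f p} \<subseteq> verts G - {f p}" by blast
  have "card (U - {f p}) \<le> M"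
    using card_subdivided_embedding_image[OF emb T(1)] M unfolding U_def
    by (meson card_Diff1_le le_trans)
  moreover have "edges G \<subseteq> verts G \<times> verts G"
    using G by (simp add: is_graph_def)
  ultimately obtain u ps where u: "u \<notin> ranked_upto r M G (d - length t)"
    and path: "walk G (f p # ps @ [u])" "distinct (f p # ps @ [u])" "length ps < r"
      "set (ps @ [u]) \<subseteq> verts G - (U - {f p})"
    using p S by (elim not_ranked_Suc_walkE)
  have "subdivided_embedding G r (insert t T) (f(t := u)) (Q(t := ps))"
    using path unfolding p_def U_def
    by (intro subdivided_embedding_insert[OF emb T(2-4)]) auto
  moreover have "\<forall>s \<in> insert t T. (f(t := u)) s \<notin> ranked_upto r M G (d - length s)"
    using not_ranked u T(3) by auto
  ultimately show thesis by (rule that)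
qed

lemma not_ranked_imp_subdivided_embedding:
  assumes G: "is_graph G" and v: "v \<in> verts G" "v \<notin> ranked_upto r M G d"
    and M: "card (verts (tree d m)) * Suc r \<le> M"
  obtains f Q where "subdivided_embedding G r (verts (tree d m)) f Q"
proof -
  have grow: "T \<subseteq> verts (tree d m) \<Longrightarrow>
      \<exists>f Q. subdivided_embedding G r T f Q \<and> (\<forall>s \<in> T. f s \<notin> ranked_upto r M G (d - length s))"
    if "finite T" "[] \<in> T" "butlast_closed T" for T
    using that
  proof (induction T rule: butlast_closed_induct)
    case root
    have "subdivided_embedding G r {[]} (\<lambda>_. v) (\<lambda>_. [])"
      using v by (simp add: subdivided_embedding_def disjoint_family_on_def)
    then show ?case using v by auto
  next
    case (insert T t)
    then obtain f Q where emb: "subdivided_embedding G r T f Q"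
      and not_ranked: "\<forall>s \<in> T. f s \<notin> ranked_upto r M G (d - length s)"
      by blast
    have "length t \<le> d"
      using insert.prems unfolding tree_verts by blast
    moreover have "card T * Suc r \<le> M"
      using card_mono[OF finite_tree_verts, of T] insert.prems M
      by (meson insert_subset le_trans mult_le_mono1)
    ultimately obtain u ps where "subdivided_embedding G r (insert t T) (f(t := u)) (Q(t := ps))"
      "\<forall>s \<in> insert t T. (f(t := u)) s \<notin> ranked_upto r M G (d - length s)"
      by (rule subdivided_embedding_extend_not_ranked[OF G emb not_ranked insert.hyps(1,3-5)])
    then show ?case by blast
  qed
  have "\<exists>f Q. subdivided_embedding G r (verts (tree d m)) f Q \<and>
      (\<forall>s \<in> verts (tree d m). f s \<notin> ranked_upto r M G (d - length s))"
    by (rule grow[OF finite_tree_verts _ butlast_closed_tree_verts order.refl]) (simp add: tree_verts)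
  then show thesis
    using that by blast
qed

lemma not_ranked_imp_shallow_top_minor:
  assumes "is_graph G" "v \<in> verts G" "v \<notin> ranked_upto r M G d"
    and "card (verts (tree d m)) * Suc r \<le> M"
  shows "shallow_top_minor r (tree d m) G"
proof -
  have "sym (edges G)"
    using assms(1) unfolding is_graph_def by (auto intro: symI)
  moreover obtain f Q where "subdivided_embedding G r (verts (tree d m)) f Q"
    using assms by (rule not_ranked_imp_subdivided_embedding)
  ultimately show ?thesis
    by (rule subdivided_embedding_imp_shallow_top_minor_tree)
qed

theorem theorem1p3:
  fixes C :: "'a graph set" and d :: nat
  assumes "\<forall>G \<in> C. is_graph G"
  shows "tree_rank_le C d \<longleftrightarrow>
    (\<forall>r. \<exists>m. \<forall>G \<in> C. \<forall>v \<in> verts G. rm_rank r m G v \<le> enat d)"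
proof
  assume tree_rank: "tree_rank_le C d"
  show "\<forall>r. \<exists>m. \<forall>G \<in> C. \<forall>v \<in> verts G. rm_rank r m G v \<le> enat d"
  proof
    fix r
    obtain m where no_minor: "\<forall>G \<in> C. \<not> shallow_top_minor r (tree d m) G"
      using tree_rank unfolding tree_rank_le_def by blast
    have "v \<in> ranked_upto r (card (verts (tree d m)) * Suc r) G d" if "G \<in> C" "v \<in> verts G" for G v
      using assms no_minor not_ranked_imp_shallow_top_minor[OF _ that(2) _ order.refl] that(1) by blast
    then show "\<exists>M. \<forall>G \<in> C. \<forall>v \<in> verts G. rm_rank r M G v \<le> enat d"
      unfolding rm_rank_le_enat_iff by blast
  qed
next
  assume ranks: "\<forall>r. \<exists>m. \<forall>G \<in> C. \<forall>v \<in> verts G. rm_rank r m G v \<le> enat d"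
  show "tree_rank_le C d"
    unfolding tree_rank_le_def
  proof
    fix r
    obtain m where ranked: "\<forall>G \<in> C. \<forall>v \<in> verts G. v \<in> ranked_upto (Suc r) m G d"
      using ranks unfolding rm_rank_le_enat_iff by blast
    have "\<not> shallow_top_minor r (tree d (Suc m)) G" if "G \<in> C" for G
      using assms ranked shallow_top_minor_imp_not_ranked[of G r d "Suc m" m] that by auto
    then show "\<exists>M. \<forall>G \<in> C. \<not> shallow_top_minor r (tree d M) G" by blast
  qed
qed

end
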